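(* For every positive integer $d\ne 2$, $\mathrm{rc}(\lozenge_d) = d+1$.
   Context: $\lozenge_d = \{0,\pm e_1,\dots,\pm e_d\}\subseteq\mathbb{Z}^d$. $\mathrm{rc}(X)$ is the smallest number of facets of a polyhedron $P\subseteq\mathbb{R}^d$ with $P\cap\mathbb{Z}^d = X$. *)

theory Defs
  imports "HOL-Analysis.Analysis"
begin

definition int_points :: "(real ^ 'n) set" where
  "int_points = {x. \<forall>i. x $ i \<in> \<int>}"

definition diamond :: "(real ^ 'n) set" where
  "diamond = {0} \<union> {axis i 1 | i. True} \<union> {axis i (-1) | i. True}"

definition rc :: "(real ^ 'n) set \<Rightarrow> nat" where
  "rc X = (LEAST m. \<exists>P. polyhedron P \<and> P \<inter> int_points = X \<and> card {F. F facet_of P} = m)"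

end

theory Submission
  imports Defs
begin

(*
  A polyhedron P with P \<inter> Z^d = \<diamond>_d contains \<diamond>_d, hence is full-dimensional
  and is cut out by at most as many halfspaces a_h x \<le> b_h as it has facets. If there were at
  most d of them, either their normals miss a direction v, and Dirichlet's simultaneous
  approximation yields a nonzero lattice point z close to the line R v, so that 2 z lies in P
  but not in \<diamond>_d; or the normals form a basis, and rounding a point w with a_h w = -K for a
  large K gives a lattice point of P violating the inequalities -b_h \<le> a_h x that the
  centrally symmetric set \<diamond>_d satisfies.

  For d = 1 and d = 3 explicit systems of 2 and 4 inequalities work. For d \<ge> 4
  take the d inequalities 2 x_j - \<Sigma> x \<le> 1 (j < d), each perturbed by a small cyclic term,
  together with \<Sigma> x \<le> 1. On lattice points the perturbation only breaks ties; a counting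
  argument with the cyclic moments W_j = \<Sigma>_k ((k - j) mod d) x_k, which step by d x_j - \<Sigma> x
  along the cycle, shows that the only lattice solutions are 0 and \<plusminus>e_i.
*)

lemma card_facets_le_card_halfspaces:
  fixes P :: "'a::euclidean_space set"
  assumes "finite F0" and halfspaces: "\<And>h. h \<in> F0 \<Longrightarrow> \<exists>a b. a \<noteq> 0 \<and> h = {x. a \<bullet> x \<le> b}"
    and P: "P = \<Inter>F0" and full: "affine hull P = UNIV"
  shows "card {C. C facet_of P} \<le> card F0"
proof -
  obtain F where F: "F \<subseteq> F0" "\<Inter>F = P"
      and least: "\<And>F'. F' \<subseteq> F0 \<and> \<Inter>F' = P \<Longrightarrow> card F \<le> card F'"
    using ex_has_least_nat[of "\<lambda>F. F \<subseteq> F0 \<and> \<Inter>F = P" F0 card] P by blast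
  have "finite F" using F(1) \<open>finite F0\<close> finite_subset by blast
  have "\<forall>h\<in>F. \<exists>a b. a \<noteq> 0 \<and> h = {x. a \<bullet> x \<le> b}" using halfspaces F(1) by blast
  then obtain a b where ab: "\<And>h. h \<in> F \<Longrightarrow> a h \<noteq> 0 \<and> h = {x. a h \<bullet> x \<le> b h}"
    by metis
  have minimal: "P \<subset> affine hull P \<inter> \<Inter>F'" if "F' \<subset> F" for F'
  proof -
    have "card F' < card F" using that \<open>finite F\<close> psubset_card_mono by blast
    then have "\<Inter>F' \<noteq> P" using that F(1) least[of F'] by auto
    then show ?thesis using that F(2) full Inter_anti_mono[of F' F] by auto
  qed
  have "{C. C facet_of P} = (\<lambda>h. P \<inter> {x. a h \<bullet> x = b h}) ` F"
    using facet_of_polyhedron_explicit[OF \<open>finite F\<close> _ ab minimal] F(2) full by auto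
  then have "card {C. C facet_of P} \<le> card F" by (simp add: card_image_le \<open>finite F\<close>)
  also have "\<dots> \<le> card F0" using F(1) \<open>finite F0\<close> card_mono by blast
  finally show ?thesis .
qed

lemma exists_point_tight_at_single_constraint:
  fixes x y :: "'a::real_inner"
  assumes x: "\<And>h. h \<in> F \<Longrightarrow> a h \<bullet> x < b h"
    and y: "\<And>h. h \<in> F \<Longrightarrow> h \<noteq> h1 \<Longrightarrow> a h \<bullet> y \<le> b h"
    and "h1 \<in> F" and "b h1 < a h1 \<bullet> y"
  obtains w where "a h1 \<bullet> w = b h1" "\<And>h. h \<in> F \<Longrightarrow> h \<noteq> h1 \<Longrightarrow> a h \<bullet> w < b h"
proof
  define t where "t = (b h1 - a h1 \<bullet> x) / (a h1 \<bullet> y - a h1 \<bullet> x)"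
  have t: "0 < t" "t < 1" using x[OF \<open>h1 \<in> F\<close>] \<open>b h1 < a h1 \<bullet> y\<close> by (simp_all add: t_def)
  define w where "w = x + t *\<^sub>R (y - x)"
  have inner_w: "a h \<bullet> w = (1 - t) * (a h \<bullet> x) + t * (a h \<bullet> y)" for h
    by (simp add: w_def inner_diff_right inner_add_right algebra_simps)
  have "a h1 \<bullet> x + t * (a h1 \<bullet> y - a h1 \<bullet> x) = b h1"
    using x[OF \<open>h1 \<in> F\<close>] \<open>b h1 < a h1 \<bullet> y\<close> by (simp add: t_def)
  then show "a h1 \<bullet> w = b h1" by (simp add: inner_w algebra_simps)
  show "a h \<bullet> w < b h" if "h \<in> F" "h \<noteq> h1" for h
  proof -
    have "(1 - t) * (a h \<bullet> x) < (1 - t) * b h"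
      using x[OF that(1)] t by (intro mult_strict_left_mono) auto
    moreover have "t * (a h \<bullet> y) \<le> t * b h"
      using y[OF that] t by (intro mult_left_mono) auto
    ultimately show ?thesis unfolding inner_w by (simp add: algebra_simps)
  qed
qed

lemma inj_on_tight_sets_if_irredundant:
  fixes x0 :: "'a::real_inner"
  assumes mem_P: "\<And>x. x \<in> P \<longleftrightarrow> (\<forall>h\<in>H. a h \<bullet> x \<le> b h)"
    and irredundant: "\<And>h. h \<in> H \<Longrightarrow> \<exists>y. y \<notin> P \<and> (\<forall>h'\<in>H - {h}. a h' \<bullet> y \<le> b h')"
    and x0: "\<And>h. h \<in> H \<Longrightarrow> a h \<bullet> x0 < b h"
  shows "inj_on (\<lambda>h. P \<inter> {x. a h \<bullet> x = b h}) H"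
proof
  fix h1 h2 assume "h1 \<in> H" "h2 \<in> H" and same: "P \<inter> {x. a h1 \<bullet> x = b h1} = P \<inter> {x. a h2 \<bullet> x = b h2}"
  show "h1 = h2"
  proof (rule ccontr)
    assume "h1 \<noteq> h2"
    obtain y where "y \<notin> P" and y: "\<And>h. h \<in> H \<Longrightarrow> h \<noteq> h1 \<Longrightarrow> a h \<bullet> y \<le> b h"
      using irredundant[OF \<open>h1 \<in> H\<close>] by blast
    then have "b h1 < a h1 \<bullet> y" using mem_P by (metis not_le)
    then obtain w where w: "a h1 \<bullet> w = b h1" "\<And>h. h \<in> H \<Longrightarrow> h \<noteq> h1 \<Longrightarrow> a h \<bullet> w < b h"
      using exists_point_tight_at_single_constraint[where x = x0 and y = y] x0 y \<open>h1 \<in> H\<close> by metis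
    have "a h \<bullet> w \<le> b h" if "h \<in> H" for h
      using w(1) w(2)[OF that] by (cases "h = h1") auto
    then have "w \<in> P \<inter> {x. a h1 \<bullet> x = b h1}" using w(1) mem_P by blast
    then have "a h2 \<bullet> w = b h2" using same by blast
    with w(2)[OF \<open>h2 \<in> H\<close>] \<open>h1 \<noteq> h2\<close> show False by simp
  qed
qed

lemma polyhedron_obtain_halfspaces_card_le_facets:
  fixes P :: "'a::euclidean_space set"
  assumes "polyhedron P" and full: "affine hull P = UNIV"
  obtains H :: "'a set set" and a b where "finite H"
    "\<And>x. x \<in> P \<longleftrightarrow> (\<forall>h\<in>H. a h \<bullet> x \<le> b h)" "card H \<le> card {C. C facet_of P}"
proof -
  obtain H where "finite H" and P: "P = affine hull P \<inter> \<Inter>H"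
     and "\<And>h. h \<in> H \<Longrightarrow> \<exists>a b. a \<noteq> 0 \<and> h = {x. a \<bullet> x \<le> b}"
     and minimal: "\<And>H'. H' \<subset> H \<Longrightarrow> P \<subset> affine hull P \<inter> \<Inter>H'"
    using \<open>polyhedron P\<close> by (simp add: polyhedron_Int_affine_minimal) meson
  then obtain a b where ab: "\<And>h. h \<in> H \<Longrightarrow> a h \<noteq> 0 \<and> h = {x. a h \<bullet> x \<le> b h}" by metis
  have "P = \<Inter>H" using P[unfolded full] by simp
  then have mem_P: "x \<in> P \<longleftrightarrow> (\<forall>h\<in>H. a h \<bullet> x \<le> b h)" for x
    using ab by auto
  have irredundant: "\<exists>y. y \<notin> P \<and> (\<forall>h'\<in>H - {h}. a h' \<bullet> y \<le> b h')" if "h \<in> H" for h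
  proof -
    have "P \<subset> \<Inter>(H - {h})" using minimal[of "H - {h}"] that full by auto
    then show ?thesis using ab by blast
  qed
  have "P \<noteq> {}" using full by auto
  then obtain x0 where "x0 \<in> rel_interior P"
    using rel_interior_eq_empty polyhedron_imp_convex \<open>polyhedron P\<close> by blast
  then have "a h \<bullet> x0 < b h" if "h \<in> H" for h
    using rel_interior_polyhedron_explicit[OF \<open>finite H\<close> P ab minimal] that by auto
  then have "inj_on (\<lambda>h. P \<inter> {x. a h \<bullet> x = b h}) H"
    using inj_on_tight_sets_if_irredundant[OF mem_P irredundant] by blast
  moreover have "(\<lambda>h. P \<inter> {x. a h \<bullet> x = b h}) ` H \<subseteq> {C. C facet_of P}"
    using facet_of_polyhedron_explicit[OF \<open>finite H\<close> P ab minimal] by blast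
  ultimately have "card H \<le> card {C. C facet_of P}"
    using card_inj_on_le finite_polyhedron_facets[OF \<open>polyhedron P\<close>] by blast
  with \<open>finite H\<close> mem_P that show ?thesis by blast
qed

lemma mem_diamond_iff:
  "x \<in> diamond \<longleftrightarrow> x = 0 \<or> (\<exists>i. x = axis i 1) \<or> (\<exists>i. x = axis i (-1))"
  by (auto simp: diamond_def)

lemma diamond_subset_int_points: "diamond \<subseteq> int_points"
  by (auto simp: diamond_def int_points_def axis_def)

lemma abs_component_le_1_if_mem_diamond: "x \<in> diamond \<Longrightarrow> \<bar>x $ i\<bar> \<le> 1"
  by (auto simp: mem_diamond_iff axis_def)

lemma uminus_mem_diamond: "x \<in> diamond \<Longrightarrow> - x \<in> diamond"
proof -
  have "- axis i c = axis i (- c)" for i and c :: real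
    by (simp add: vec_eq_iff axis_def)
  then show "x \<in> diamond \<Longrightarrow> - x \<in> diamond" by (auto simp: mem_diamond_iff)
qed

lemma diamond_subset_halfspace_iff:
  "diamond \<subseteq> {x. a \<bullet> x \<le> b} \<longleftrightarrow> 0 \<le> b \<and> (\<forall>i. \<bar>a $ i\<bar> \<le> b)"
proof
  assume sub: "diamond \<subseteq> {x. a \<bullet> x \<le> b}"
  have "0 \<in> diamond" "axis i 1 \<in> diamond" "axis i (-1) \<in> diamond" for i
    by (auto simp: diamond_def)
  then have "0 \<le> b" "a $ i \<le> b" "- a $ i \<le> b" for i
    using sub by (force simp: inner_axis)+
  then show "0 \<le> b \<and> (\<forall>i. \<bar>a $ i\<bar> \<le> b)" by (simp add: abs_le_iff)
qed (auto simp: mem_diamond_iff inner_axis abs_le_iff)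

lemma affine_hull_diamond: "affine hull (diamond :: (real^'n) set) = UNIV"
proof -
  have "cart_basis \<subseteq> (diamond :: (real^'n) set)" by (auto simp: cart_basis_def diamond_def)
  then have "span (diamond :: (real^'n) set) = UNIV"
    using span_mono[of cart_basis] span_cart_basis span_vec_eq by (metis top.extremum_uniqueI)
  moreover have "0 \<in> affine hull (diamond :: (real^'n) set)" by (simp add: diamond_def hull_inc)
  ultimately show ?thesis using affine_hull_span_0 by metis
qed

lemma mem_diamond_if_sum_abs_le_1:
  fixes x :: "real^'n"
  assumes "x \<in> int_points" and sum_le: "(\<Sum>i\<in>UNIV. \<bar>x $ i\<bar>) \<le> 1"
  shows "x \<in> diamond"
proof (cases "x = 0")
  case True
  then show ?thesis by (simp add: diamond_def)
next
  case False
  then obtain i where "x $ i \<noteq> 0" by (metis vec_eq_iff zero_index)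
  moreover have "x $ i \<in> \<int>" using assms(1) by (simp add: int_points_def)
  ultimately have "1 \<le> \<bar>x $ i\<bar>" by (rule Ints_nonzero_abs_ge1[rotated])
  moreover have "(\<Sum>j\<in>UNIV. \<bar>x $ j\<bar>) = \<bar>x $ i\<bar> + (\<Sum>j\<in>UNIV - {i}. \<bar>x $ j\<bar>)"
    by (simp add: sum.remove)
  moreover have "0 \<le> (\<Sum>j\<in>UNIV - {i}. \<bar>x $ j\<bar>)" by (simp add: sum_nonneg)
  ultimately have "\<bar>x $ i\<bar> = 1" and "(\<Sum>j\<in>UNIV - {i}. \<bar>x $ j\<bar>) = 0" using sum_le by linarith+
  then have "x $ j = 0" if "j \<noteq> i" for j using that by (simp add: sum_nonneg_eq_0_iff)
  then have "x = axis i (x $ i)" by (simp add: vec_eq_iff axis_def)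
  with \<open>\<bar>x $ i\<bar> = 1\<close> show ?thesis by (auto simp: mem_diamond_iff abs_if split: if_splits)
qed

lemma abs_inner_le_card_mult:
  fixes a x :: "real^'n"
  assumes "\<And>i. \<bar>a $ i\<bar> \<le> B" "\<And>i. \<bar>x $ i\<bar> \<le> c"
  shows "\<bar>a \<bullet> x\<bar> \<le> real CARD('n) * B * c"
proof -
  have "\<bar>a \<bullet> x\<bar> = \<bar>\<Sum>i\<in>UNIV. a $ i * x $ i\<bar>" by (simp add: inner_vec_def)
  also have "\<dots> \<le> (\<Sum>i\<in>UNIV. \<bar>a $ i * x $ i\<bar>)" by (rule sum_abs)
  also have "\<dots> \<le> (\<Sum>i\<in>(UNIV::'n set). B * c)"
    by (intro sum_mono) (simp add: abs_mult assms mult_mono')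
  finally show ?thesis by simp
qed

lemma obtain_nat_enumeration:
  obtains \<sigma> :: "nat \<Rightarrow> 'n::finite" and idx :: "'n \<Rightarrow> nat"
  where "bij_betw \<sigma> {..<CARD('n)} UNIV" "\<And>i. idx i < CARD('n)" "\<And>i. \<sigma> (idx i) = i"
    "\<And>k. k < CARD('n) \<Longrightarrow> idx (\<sigma> k) = k"
proof -
  obtain \<sigma> :: "nat \<Rightarrow> 'n" where \<sigma>: "bij_betw \<sigma> {..<CARD('n)} UNIV"
    using ex_bij_betw_nat_finite[of "UNIV::'n set"] by (auto simp: atLeast0LessThan)
  show thesis
    by (rule that[OF \<sigma>, of "inv_into {..<CARD('n)} \<sigma>"])
      (use bij_betw_inv_into_right[OF \<sigma>] bij_betw_apply[OF bij_betw_inv_into[OF \<sigma>]]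
        bij_betw_inv_into_left[OF \<sigma>] in auto)
qed

lemma int_point_near_line:
  fixes v :: "real^'n" and N :: nat
  assumes "v \<noteq> 0" "N > 0"
  obtains z t where "z \<in> int_points" "z \<noteq> 0" "\<And>i. \<bar>z $ i - t * v $ i\<bar> < 1 / N"
proof -
  let ?d = "CARD('n)"
  obtain i0 where "v $ i0 \<noteq> 0" using \<open>v \<noteq> 0\<close> by (metis vec_eq_iff zero_index)
  obtain \<sigma> :: "nat \<Rightarrow> 'n" and idx where "bij_betw \<sigma> {..<?d} UNIV"
    and idx: "\<And>i. idx i < ?d" "\<And>i. \<sigma> (idx i) = i" and "\<And>k. k < ?d \<Longrightarrow> idx (\<sigma> k) = k"
    using obtain_nat_enumeration[where 'n = 'n] by blast
  obtain q p where "0 < q" and qp: "\<And>k. k < ?d \<Longrightarrow> \<bar>of_int q * (v $ \<sigma> k / v $ i0) - of_int (p k)\<bar> < 1 / N"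
    using Dirichlet_approx_simult[OF \<open>N > 0\<close>, of ?d "\<lambda>k. v $ \<sigma> k / v $ i0"] by blast
  define z :: "real^'n" where "z = (\<chi> i. of_int (p (idx i)))"
  define t where "t = of_int q / v $ i0"
  have near: "\<bar>z $ i - t * v $ i\<bar> < 1 / N" for i
  proof -
    have "z $ i - t * v $ i = - (of_int q * (v $ \<sigma> (idx i) / v $ i0) - of_int (p (idx i)))"
      by (simp add: z_def t_def idx(2))
    then show ?thesis using qp[OF idx(1)] by (simp only: abs_minus_cancel)
  qed
  have "\<bar>z $ i0 - of_int q\<bar> < 1 / N" using near[of i0] \<open>v $ i0 \<noteq> 0\<close> by (simp add: t_def)
  also have "1 / N \<le> (1::real)" using \<open>N > 0\<close> by simp
  finally have "\<bar>p (idx i0) - q\<bar> < 1" by (simp add: z_def)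
  then have "z $ i0 = of_int q" by (simp add: z_def)
  then have "z $ i0 \<noteq> 0" using \<open>0 < q\<close> by simp
  then have "z \<noteq> 0" by auto
  moreover have "z \<in> int_points" by (simp add: int_points_def z_def)
  ultimately show ?thesis using near that by blast
qed

lemma exists_inner_eq_on_spanning_set:
  fixes A :: "'a::euclidean_space set"
  assumes "finite A" "span A = UNIV" "card A \<le> DIM('a)"
  obtains w where "\<And>a. a \<in> A \<Longrightarrow> a \<bullet> w = c a"
proof -
  have "independent A" using card_le_dim_spanning[of A UNIV] assms by simp
  then obtain f :: "'a \<Rightarrow> real" where "linear f" "\<And>a. a \<in> A \<Longrightarrow> f a = c a"
    using linear_independent_extend by metis
  then have "a \<bullet> adjoint f 1 = c a" if "a \<in> A" for a
    using adjoint_works[OF \<open>linear f\<close>, of a 1] that by simp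
  then show ?thesis using that by blast
qed

context
  fixes a :: "'h \<Rightarrow> real^'n" and b :: "'h \<Rightarrow> real" and H :: "'h set"
  assumes diamond_in_halfspaces: "\<And>h. h \<in> H \<Longrightarrow> diamond \<subseteq> {x. a h \<bullet> x \<le> b h}"
begin

lemma int_point_outside_diamond_if_common_kernel:
  assumes "v \<noteq> 0" and kernel: "\<And>h. h \<in> H \<Longrightarrow> a h \<bullet> v = 0"
  obtains z where "z \<in> int_points - diamond" "\<And>h. h \<in> H \<Longrightarrow> a h \<bullet> z \<le> b h"
proof -
  let ?d = "CARD('n)"
  obtain z t where z: "z \<in> int_points" "z \<noteq> 0" and near: "\<And>i. \<bar>z $ i - t * v $ i\<bar> < 1 / (2 * ?d)"
    using int_point_near_line[OF \<open>v \<noteq> 0\<close>, of "2 * ?d"] by auto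
  have "2 *\<^sub>R z \<notin> diamond"
  proof
    obtain i where "z $ i \<noteq> 0" using \<open>z \<noteq> 0\<close> by (metis vec_eq_iff zero_index)
    moreover have "z $ i \<in> \<int>" using z(1) by (simp add: int_points_def)
    ultimately have "1 \<le> \<bar>z $ i\<bar>" by (rule Ints_nonzero_abs_ge1[rotated])
    moreover assume "2 *\<^sub>R z \<in> diamond"
    then have "\<bar>2 * z $ i\<bar> \<le> 1" using abs_component_le_1_if_mem_diamond by fastforce
    ultimately show False by simp
  qed
  moreover have "2 *\<^sub>R z \<in> int_points" using z(1) by (simp add: int_points_def)
  moreover have "a h \<bullet> (2 *\<^sub>R z) \<le> b h" if "h \<in> H" for h
  proof -
    have "\<bar>a h $ i\<bar> \<le> b h" for i using diamond_in_halfspaces[OF that] unfolding diamond_subset_halfspace_iff by blast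
    moreover have "\<bar>(z - t *\<^sub>R v) $ i\<bar> \<le> 1 / (2 * ?d)" for i using near[of i] by simp
    ultimately have "a h \<bullet> (z - t *\<^sub>R v) \<le> ?d * b h * (1 / (2 * ?d))"
      using abs_inner_le_card_mult abs_le_D1 by blast
    moreover have "a h \<bullet> (z - t *\<^sub>R v) = a h \<bullet> z" using kernel[OF that] by (simp add: inner_diff_right)
    ultimately show ?thesis by simp
  qed
  ultimately show ?thesis using that by blast
qed

lemma int_point_outside_diamond_if_spanning:
  assumes "finite H" "card H \<le> CARD('n)" and spanning: "span (a ` H) = UNIV"
  obtains z where "z \<in> int_points - diamond" "\<And>h. h \<in> H \<Longrightarrow> a h \<bullet> z \<le> b h"
proof -
  let ?d = "CARD('n)"
  have b_nonneg: "0 \<le> b h" and a_bound: "\<bar>a h $ i\<bar> \<le> b h" if "h \<in> H" for h i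
    using diamond_in_halfspaces[OF that] unfolding diamond_subset_halfspace_iff by blast+
  define K where "K = 1 + (\<Sum>h\<in>H. (?d + 1) * b h)"
  have K: "1 + (?d + 1) * b h \<le> K" if "h \<in> H" for h
    unfolding K_def using that \<open>finite H\<close> b_nonneg by (auto intro!: member_le_sum)
  have "card (a ` H) \<le> DIM(real^'n)" using card_image_le[OF \<open>finite H\<close>, of a] assms(2) by simp
  then obtain w where "\<And>a'. a' \<in> a ` H \<Longrightarrow> a' \<bullet> w = - K"
    using exists_inner_eq_on_spanning_set[where A = "a ` H" and c = "\<lambda>_. - K"] \<open>finite H\<close> spanning
    by blast
  then have w: "a h \<bullet> w = - K" if "h \<in> H" for h using that by blast
  define z :: "real^'n" where "z = (\<chi> i. of_int \<lfloor>w $ i\<rfloor>)"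
  have far: "a h \<bullet> z \<le> - 1 - b h" if "h \<in> H" for h
  proof -
    have "\<bar>(z - w) $ i\<bar> \<le> 1" for i by (simp add: z_def) linarith
    then have "a h \<bullet> (z - w) \<le> ?d * b h * 1"
      using abs_inner_le_card_mult a_bound[OF that] abs_le_D1 by blast
    then show ?thesis using w[OF that] K[OF that] by (simp add: inner_diff_right algebra_simps)
  qed
  have "H \<noteq> {}"
  proof
    assume "H = {}"
    then have "axis undefined 1 = (0::real^'n)" using spanning by (metis UNIV_I image_empty singletonD span_empty)
    then show False by (simp add: axis_eq_0_iff)
  qed
  then obtain h0 where "h0 \<in> H" by blast
  have "z \<notin> diamond"
  proof
    assume "z \<in> diamond"
    then have "a h0 \<bullet> (- z) \<le> b h0" using uminus_mem_diamond diamond_in_halfspaces[OF \<open>h0 \<in> H\<close>] by blast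
    then show False using far[OF \<open>h0 \<in> H\<close>] by simp
  qed
  moreover have "z \<in> int_points" by (simp add: int_points_def z_def)
  moreover have "a h \<bullet> z \<le> b h" if "h \<in> H" for h using far[OF that] b_nonneg[OF that] by simp
  ultimately show ?thesis using that by blast
qed

lemma int_point_outside_diamond_if_few_halfspaces:
  assumes "finite H" "card H \<le> CARD('n)"
  obtains z where "z \<in> int_points - diamond" "\<And>h. h \<in> H \<Longrightarrow> a h \<bullet> z \<le> b h"
proof (cases "span (a ` H) = UNIV")
  case True
  from int_point_outside_diamond_if_spanning[OF assms this] that show ?thesis by blast
next
  case False
  then have "dim (a ` H) < DIM(real^'n)" using dim_eq_full dim_subset_UNIV le_neq_implies_less by blast
  then obtain v where "v \<noteq> 0" and orth: "\<And>y. y \<in> span (a ` H) \<Longrightarrow> orthogonal v y"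
    using orthogonal_to_subspace_exists by blast
  have "a h \<bullet> v = 0" if "h \<in> H" for h
  proof -
    have "orthogonal v (a h)" using orth span_base[of "a h" "a ` H"] that by blast
    then show ?thesis by (simp add: orthogonal_def inner_commute)
  qed
  from int_point_outside_diamond_if_common_kernel[OF \<open>v \<noteq> 0\<close> this] that show ?thesis by blast
qed

end

lemma card_facets_ge_if_int_points_diamond:
  fixes P :: "(real^'n) set"
  assumes "polyhedron P" and P_int: "P \<inter> int_points = diamond"
  shows "CARD('n) + 1 \<le> card {C. C facet_of P}"
proof (rule ccontr)
  assume few: "\<not> ?thesis"
  have "diamond \<subseteq> P" using P_int by blast
  then have "affine hull P = UNIV" using hull_mono[of diamond P affine] affine_hull_diamond by auto
  then obtain H :: "(real^'n) set set" and a b where "finite H"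
    and P: "\<And>x. x \<in> P \<longleftrightarrow> (\<forall>h\<in>H. a h \<bullet> x \<le> b h)" and "card H \<le> card {C. C facet_of P}"
    using polyhedron_obtain_halfspaces_card_le_facets \<open>polyhedron P\<close> by blast
  then have "card H \<le> CARD('n)" using few by linarith
  moreover have "diamond \<subseteq> {x. a h \<bullet> x \<le> b h}" if "h \<in> H" for h
    using \<open>diamond \<subseteq> P\<close> P that by blast
  ultimately obtain z where "z \<in> int_points - diamond" "\<And>h. h \<in> H \<Longrightarrow> a h \<bullet> z \<le> b h"
    using int_point_outside_diamond_if_few_halfspaces \<open>finite H\<close> by blast
  then show False using P P_int by blast
qed

definition cyc_dist :: "nat \<Rightarrow> nat \<Rightarrow> nat \<Rightarrow> nat" where
  "cyc_dist d j k = (if j \<le> k then k - j else k + d - j)"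

definition cyc_next :: "nat \<Rightarrow> nat \<Rightarrow> nat" where
  "cyc_next d j = (if Suc j = d then 0 else Suc j)"

definition cyc_moment :: "nat \<Rightarrow> (nat \<Rightarrow> int) \<Rightarrow> nat \<Rightarrow> int" where
  "cyc_moment d Y j = (\<Sum>k<d. int (cyc_dist d j k) * Y k)"

lemma cyc_next_less: "j < d \<Longrightarrow> cyc_next d j < d"
  by (auto simp: cyc_next_def)

lemma cyc_next_surj: "p < d \<Longrightarrow> \<exists>q<d. cyc_next d q = p"
  by (cases p) (auto simp: cyc_next_def intro: exI[of _ "d - 1"])

lemma cyc_dist_less: "j < d \<Longrightarrow> k < d \<Longrightarrow> cyc_dist d j k < d"
  by (auto simp: cyc_dist_def)

lemma cyc_moment_next:
  assumes "j < d"
  shows "cyc_moment d Y (cyc_next d j) = cyc_moment d Y j + int d * Y j - (\<Sum>k<d. Y k)"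
proof -
  have "int (cyc_dist d (cyc_next d j) k) = int (cyc_dist d j k) + (if k = j then int d - 1 else -1)"
    if "k < d" for k
    using assms that by (auto simp: cyc_dist_def cyc_next_def)
  then have "cyc_moment d Y (cyc_next d j)
      = (\<Sum>k<d. int (cyc_dist d j k) * Y k + (if k = j then int d * Y k else 0) - Y k)"
    unfolding cyc_moment_def by (intro sum.cong) (auto simp: algebra_simps)
  also have "\<dots> = cyc_moment d Y j + int d * Y j - (\<Sum>k<d. Y k)"
    using assms by (simp add: cyc_moment_def sum.distrib sum_subtractf)
  finally show ?thesis .
qed

lemma cyc_moment_shift:
  assumes "i \<le> j" "j < d"
  shows "cyc_moment d Y j
    = cyc_moment d Y i + int d * (\<Sum>k\<in>{i..<j}. Y k) - int (j - i) * (\<Sum>k<d. Y k)"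
  using assms
proof (induction j rule: dec_induct)
  case base
  then show ?case by simp
next
  case (step j)
  then have "cyc_next d j = Suc j" by (simp add: cyc_next_def)
  then have "cyc_moment d Y (Suc j) = cyc_moment d Y j + int d * Y j - (\<Sum>k<d. Y k)"
    using cyc_moment_next[of j d Y] step by simp
  moreover have "(\<Sum>k\<in>{i..<Suc j}. Y k) = (\<Sum>k\<in>{i..<j}. Y k) + Y j" "int (Suc j - i) = int (j - i) + 1"
    using step(1) by simp_all
  ultimately show ?case using step by (simp add: algebra_simps)
qed

lemma sum_cyc_moment: "2 * (\<Sum>j<d. cyc_moment d Y j) = int d * (int d - 1) * (\<Sum>k<d. Y k)"
proof -
  have gauss: "2 * (\<Sum>m<n. int m) = int n * (int n - 1)" for n
    by (induction n) (auto simp: algebra_simps)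
  have column: "(\<Sum>j<d. int (cyc_dist d j k)) = (\<Sum>m<d. int m)" if "k < d" for k
  proof -
    have "bij_betw (\<lambda>j. cyc_dist d j k) {..<d} {..<d}"
      by (rule bij_betw_byWitness[where f' = "\<lambda>j. cyc_dist d j k"])
        (use that in \<open>auto simp: cyc_dist_def\<close>)
    then show ?thesis by (rule sum.reindex_bij_betw)
  qed
  have "(\<Sum>j<d. cyc_moment d Y j) = (\<Sum>k<d. \<Sum>j<d. int (cyc_dist d j k) * Y k)"
    unfolding cyc_moment_def by (rule sum.swap)
  also have "\<dots> = (\<Sum>k<d. (\<Sum>m<d. int m) * Y k)"
    using column by (intro sum.cong) (simp_all add: sum_distrib_right[symmetric])
  also have "\<dots> = (\<Sum>m<d. int m) * (\<Sum>k<d. Y k)" by (simp add: sum_distrib_left)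
  finally show ?thesis by (simp add: gauss mult.assoc[symmetric])
qed

lemma sum_distinct_ints_le:
  fixes T :: "int set"
  assumes "finite T" "\<And>x. x \<in> T \<Longrightarrow> x \<le> M"
  shows "2 * \<Sum>T \<le> 2 * int (card T) * M - int (card T) * (int (card T) - 1)"
  using assms
proof (induction "card T" arbitrary: T M)
  case 0
  then show ?case by simp
next
  case (Suc n)
  define m where "m = Max T"
  have "T \<noteq> {}" using Suc.hyps(2) by auto
  then have "m \<in> T" "m \<le> M" using Suc.prems m_def by auto
  have "\<And>x. x \<in> T - {m} \<Longrightarrow> x \<le> m - 1"
    using Suc.prems(1) m_def by (metis DiffE Max_ge insertCI order_le_less zle_diff1_eq)
  moreover have "card (T - {m}) = n" using Suc.hyps(2) \<open>m \<in> T\<close> by simp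
  ultimately have "2 * \<Sum>(T - {m}) \<le> 2 * int n * (m - 1) - int n * (int n - 1)"
    using Suc.hyps(1) Suc.prems(1) by (metis finite_Diff)
  moreover have "\<Sum>T = m + \<Sum>(T - {m})" using Suc.prems(1) \<open>m \<in> T\<close> by (simp add: sum.remove)
  moreover have "int (Suc n) * m \<le> int (Suc n) * M" using \<open>m \<le> M\<close> by (intro mult_left_mono) auto
  moreover have "2 * m + (2 * int n * (m - 1) - int n * (int n - 1))
      = 2 * int (Suc n) * m - int (Suc n) * (int (Suc n) - 1)"
    by (simp add: algebra_simps)
  ultimately show ?case unfolding Suc.hyps(2)[symmetric] by linarith
qed

lemma inj_on_cyc_moment:
  assumes "(\<Sum>k<d. Y k) = 1"
  shows "inj_on (cyc_moment d Y) {..<d}"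
proof -
  have distinct: "cyc_moment d Y i \<noteq> cyc_moment d Y j" if "i < j" "j < d" for i j
  proof
    assume eq: "cyc_moment d Y i = cyc_moment d Y j"
    define X where "X = (\<Sum>k\<in>{i..<j}. Y k)"
    have "int d * X = int (j - i)"
      using cyc_moment_shift[of i j d Y] that assms eq by (simp add: X_def)
    moreover have "0 < int (j - i)" "int (j - i) < int d" using that by auto
    ultimately show False
    proof (cases "X \<le> 0")
      case True
      then have "int d * X \<le> 0" by (simp add: mult_nonneg_nonpos)
      then show False using \<open>int d * X = int (j - i)\<close> \<open>0 < int (j - i)\<close> by linarith
    next
      case False
      then have "int d * 1 \<le> int d * X" by (intro mult_left_mono) auto
      then show False using \<open>int d * X = int (j - i)\<close> \<open>int (j - i) < int d\<close> by linarith
    qed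
  qed
  show ?thesis
  proof (rule inj_onI)
    fix i j assume "i \<in> {..<d}" "j \<in> {..<d}" "cyc_moment d Y i = cyc_moment d Y j"
    then show "i = j" using distinct[of i j] distinct[of j i] by (cases i j rule: linorder_cases) auto
  qed
qed

context
  fixes d :: nat and Y :: "nat \<Rightarrow> int"
  assumes two_le_d: "2 \<le> d" and sum_eq_1: "(\<Sum>k<d. Y k) = 1"
    and le_1: "\<And>j. j < d \<Longrightarrow> Y j \<le> 1"
    and tiebreak: "\<And>j. j < d \<Longrightarrow> Y j = 1 \<Longrightarrow> cyc_moment d Y j \<le> Y (cyc_next d j)"
begin

lemma cyc_moment_next_eq: "j < d \<Longrightarrow> cyc_moment d Y (cyc_next d j) = cyc_moment d Y j + int d * Y j - 1"
  using cyc_moment_next[of j d Y] sum_eq_1 by simp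

lemma cyc_moment_le: "j < d \<Longrightarrow> cyc_moment d Y j \<le> int d - 1"
proof -
  have "{..<d} \<noteq> {}" using two_le_d by (simp add: lessThan_empty_iff)
  then have "Max (cyc_moment d Y ` {..<d}) \<in> cyc_moment d Y ` {..<d}" by (intro Max_in) auto
  then obtain p where "p < d" and "cyc_moment d Y p = Max (cyc_moment d Y ` {..<d})" by auto
  then have p_max: "cyc_moment d Y j \<le> cyc_moment d Y p" if "j < d" for j
    using that by simp
  obtain q where "q < d" "cyc_next d q = p" using cyc_next_surj \<open>p < d\<close> by blast
  then have moment_p: "cyc_moment d Y p = cyc_moment d Y q + int d * Y q - 1"
    using cyc_moment_next_eq by blast
  have "cyc_moment d Y p \<le> int d - 1"
  proof (cases "Y q = 1")
    case False
    then have "int d * Y q \<le> 0" using le_1[OF \<open>q < d\<close>] by (simp add: mult_nonneg_nonpos)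
    then show ?thesis using moment_p p_max[OF \<open>q < d\<close>] by simp
  next
    case True
    then have "cyc_moment d Y q \<le> Y p" using tiebreak \<open>q < d\<close> \<open>cyc_next d q = p\<close> by blast
    then have bound: "cyc_moment d Y p \<le> Y p + int d - 1" using moment_p True by simp
    show ?thesis
    proof (cases "Y p = 1")
      case True
      then have "cyc_moment d Y p \<le> Y (cyc_next d p)" using tiebreak \<open>p < d\<close> by blast
      also have "\<dots> \<le> 1" using le_1 cyc_next_less \<open>p < d\<close> by blast
      finally show ?thesis using two_le_d by linarith
    next
      case False
      then show ?thesis using bound le_1[OF \<open>p < d\<close>] by simp
    qed
  qed
  then show "j < d \<Longrightarrow> cyc_moment d Y j \<le> int d - 1" using p_max by fastforce
qed

(* The d distinct moments are at most d - 1 and sum to d (d - 1) / 2, so none is negative. *)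
lemma cyc_moment_nonneg: "j < d \<Longrightarrow> 0 \<le> cyc_moment d Y j"
proof (rule ccontr)
  assume "j < d" and neg: "\<not> 0 \<le> cyc_moment d Y j"
  define T where "T = cyc_moment d Y ` ({..<d} - {j})"
  have inj: "inj_on (cyc_moment d Y) ({..<d} - {j})"
    using inj_on_cyc_moment[OF sum_eq_1] by (rule inj_on_subset) auto
  then have "card T = d - 1" using \<open>j < d\<close> by (simp add: T_def card_image)
  moreover have "x \<le> int d - 1" if "x \<in> T" for x using that cyc_moment_le by (auto simp: T_def)
  ultimately have "2 * \<Sum>T \<le> 2 * int (d - 1) * (int d - 1) - int (d - 1) * (int (d - 1) - 1)"
    using sum_distinct_ints_le[of T "int d - 1"] by (simp add: T_def)
  moreover have "\<Sum>T = (\<Sum>i\<in>{..<d} - {j}. cyc_moment d Y i)" unfolding T_def using inj by (simp add: sum.reindex)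
  moreover have "(\<Sum>i<d. cyc_moment d Y i) = cyc_moment d Y j + (\<Sum>i\<in>{..<d} - {j}. cyc_moment d Y i)"
    using \<open>j < d\<close> by (simp add: sum.remove)
  moreover have "2 * (\<Sum>i<d. cyc_moment d Y i) = int d * (int d - 1)"
    using sum_cyc_moment[of d Y] sum_eq_1 by simp
  moreover have "int d * (int d - 1)
      = 2 * int (d - 1) * (int d - 1) - int (d - 1) * (int (d - 1) - 1)"
    using two_le_d by (simp add: of_nat_diff algebra_simps)
  ultimately show False using neg by linarith
qed

lemma unit_vector_if_cyclic_tiebreak: "\<exists>i<d. \<forall>k<d. Y k = (if k = i then 1 else 0)"
proof -
  have moment_0: "cyc_moment d Y j = 0" if "j < d" "Y j = 1" for j
  proof (rule ccontr)
    assume "cyc_moment d Y j \<noteq> 0"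
    moreover have "cyc_moment d Y j \<le> Y (cyc_next d j)" "Y (cyc_next d j) \<le> 1"
      using tiebreak le_1 cyc_next_less that by blast+
    ultimately have "cyc_moment d Y j = 1" "Y (cyc_next d j) = 1"
      using cyc_moment_nonneg[OF \<open>j < d\<close>] by linarith+
    then have "cyc_moment d Y (cyc_next d j) = int d"
      using cyc_moment_next_eq[OF \<open>j < d\<close>] \<open>Y j = 1\<close> by simp
    then show False using cyc_moment_le[OF cyc_next_less[OF \<open>j < d\<close>]] by simp
  qed
  have "\<exists>i<d. Y i = 1"
  proof (rule ccontr)
    assume "\<not> ?thesis"
    then have "Y k \<le> 0" if "k < d" for k using le_1[OF that] that by fastforce
    then have "(\<Sum>k<d. Y k) \<le> 0" by (intro sum_nonpos) auto
    then show False using sum_eq_1 by simp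
  qed
  then obtain i where "i < d" "Y i = 1" by blast
  have others_nonpos: "Y k \<le> 0" if "k \<in> {..<d} - {i}" for k
  proof -
    have "Y k \<noteq> 1"
    proof
      assume "Y k = 1"
      then have "cyc_moment d Y k = cyc_moment d Y i" using moment_0 \<open>i < d\<close> \<open>Y i = 1\<close> that by simp
      then show False using inj_onD[OF inj_on_cyc_moment[OF sum_eq_1]] that \<open>i < d\<close> by auto
    qed
    then show ?thesis using le_1[of k] that by simp
  qed
  have "(\<Sum>k\<in>{..<d} - {i}. - Y k) = 0"
    using sum_eq_1 \<open>i < d\<close> \<open>Y i = 1\<close> by (simp add: sum.remove sum_negf)
  then have "Y k = 0" if "k \<in> {..<d} - {i}" for k
    using sum_nonneg_eq_0_iff[of "{..<d} - {i}" "\<lambda>k. - Y k"] others_nonpos that by auto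
  then show ?thesis using \<open>i < d\<close> \<open>Y i = 1\<close> by (intro exI[of _ i]) auto
qed

end

lemma sum_abs_le_1_if_cyclic_tiebreak:
  fixes Y :: "nat \<Rightarrow> int"
  assumes "3 \<le> d" and "(\<Sum>k<d. Y k) \<le> 1" and "-2 \<le> (\<Sum>k<d. Y k)"
    and upper: "\<And>j. j < d \<Longrightarrow> 2 * Y j \<le> (\<Sum>k<d. Y k) + 1"
    and tiebreak: "\<And>j. j < d \<Longrightarrow> 2 * Y j = (\<Sum>k<d. Y k) + 1 \<Longrightarrow> cyc_moment d Y j \<le> Y (cyc_next d j)"
  shows "(\<Sum>k<d. \<bar>Y k\<bar>) \<le> 1"
proof (cases "(\<Sum>k<d. Y k) = 1")
  case True
  have le_1: "Y j \<le> 1" if "j < d" for j using upper[OF that] True by simp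
  have "cyc_moment d Y j \<le> Y (cyc_next d j)" if "j < d" "Y j = 1" for j
    using tiebreak that True by simp
  moreover have "2 \<le> d" using assms(1) by simp
  ultimately obtain i where "i < d" and unit: "\<And>k. k < d \<Longrightarrow> Y k = (if k = i then 1 else 0)"
    using unit_vector_if_cyclic_tiebreak[of d Y, OF _ True le_1] by blast
  then have "(\<Sum>k<d. \<bar>Y k\<bar>) = (\<Sum>k<d. if k = i then 1 else 0)" by (intro sum.cong) auto
  then show ?thesis using \<open>i < d\<close> by simp
next
  case False
  then have nonpos: "Y j \<le> 0" if "j < d" for j using upper[OF that] assms(2) by linarith
  then have "(\<Sum>k<d. \<bar>Y k\<bar>) = (\<Sum>k<d. - Y k)" by (intro sum.cong) auto
  also have "\<dots> = - (\<Sum>k<d. Y k)" by (simp add: sum_negf)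
  finally have "(\<Sum>k<d. \<bar>Y k\<bar>) = - (\<Sum>k<d. Y k)" .
  moreover have "-1 \<le> (\<Sum>k<d. Y k)"
  proof (rule ccontr)
    assume "\<not> ?thesis"
    then have "Y j \<le> -1" if "j < d" for j using upper[OF that] by linarith
    then have "(\<Sum>k<d. Y k) \<le> - int d" using sum_mono[of "{..<d}" Y "\<lambda>_. -1"] by simp
    then show False using assms(1,3) by linarith
  qed
  ultimately show ?thesis by simp
qed

definition cyc_eps :: "nat \<Rightarrow> real" where
  "cyc_eps d = 1 / (16 * real d * real d)"

definition cyc_perturb :: "nat \<Rightarrow> nat \<Rightarrow> nat \<Rightarrow> real" where
  "cyc_perturb d j k = real (cyc_dist d j k) - (if k = cyc_next d j then 1 else 0)"

(* Row j < d is the tie-prone inequality 2 y_j - \<Sigma> y \<le> 1 plus cyc_eps d times a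
   tie-breaking term, which at integer points equals cyc_moment d Y j - Y (cyc_next d j)
   (cyc_perturb_moment); row d is \<Sigma> y \<le> 1. *)
definition cyc_rows :: "nat \<Rightarrow> nat \<Rightarrow> nat \<Rightarrow> real" where
  "cyc_rows d j k =
    (if j < d then (if k = j then 2 else 0) - 1 + cyc_eps d * cyc_perturb d j k else 1)"

lemma abs_cyc_rows_le_1:
  assumes "2 \<le> d" "j < d + 1" "k < d"
  shows "\<bar>cyc_rows d j k\<bar> \<le> 1"
proof (cases "j < d")
  case True
  have "cyc_next d j \<noteq> j" using assms(1) True by (auto simp: cyc_next_def)
  then have "cyc_perturb d j j = 0" by (simp add: cyc_perturb_def cyc_dist_def)
  moreover have "0 \<le> cyc_perturb d j k" "cyc_perturb d j k \<le> real d" if "k \<noteq> j"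
    using that True assms(3) cyc_dist_less[OF True assms(3)]
    by (auto simp: cyc_perturb_def cyc_dist_def cyc_next_def split: if_splits)
  moreover have "cyc_eps d * real d \<le> 1" "0 < cyc_eps d" using assms(1) by (simp_all add: cyc_eps_def)
  ultimately show ?thesis using True
    by (cases "k = j") (auto simp: cyc_rows_def abs_le_iff intro: order_trans[OF mult_left_mono])
qed (simp add: cyc_rows_def)

lemma cyc_rows_expand:
  assumes "j < d"
  shows "(\<Sum>k<d. cyc_rows d j k * y k)
    = 2 * y j - (\<Sum>k<d. y k) + cyc_eps d * (\<Sum>k<d. cyc_perturb d j k * y k)"
proof -
  have "(\<Sum>k<d. cyc_rows d j k * y k)
      = (\<Sum>k<d. (if k = j then 2 * y k else 0) - y k + cyc_eps d * (cyc_perturb d j k * y k))"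
    using assms by (intro sum.cong) (auto simp: cyc_rows_def algebra_simps)
  also have "\<dots> = 2 * y j - (\<Sum>k<d. y k) + cyc_eps d * (\<Sum>k<d. cyc_perturb d j k * y k)"
    using assms by (simp add: sum.distrib sum_subtractf sum_distrib_left)
  finally show ?thesis .
qed

lemma cyc_perturb_moment:
  assumes "j < d"
  shows "(\<Sum>k<d. cyc_perturb d j k * of_int (Y k)) = of_int (cyc_moment d Y j - Y (cyc_next d j))"
proof -
  have "(\<Sum>k<d. cyc_perturb d j k * of_int (Y k))
      = (\<Sum>k<d. real (cyc_dist d j k) * of_int (Y k) - (if k = cyc_next d j then of_int (Y k) else 0))"
    by (intro sum.cong) (auto simp: cyc_perturb_def algebra_simps)
  also have "\<dots> = (\<Sum>k<d. real (cyc_dist d j k) * of_int (Y k)) - of_int (Y (cyc_next d j))"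
    using cyc_next_less[OF assms] by (simp add: sum_subtractf)
  finally show ?thesis by (simp add: cyc_moment_def)
qed

lemma abs_cyc_perturbation_le:
  assumes "j < d"
  shows "\<bar>\<Sum>k<d. cyc_perturb d j k * y k\<bar> \<le> real d * (\<Sum>k<d. \<bar>y k\<bar>)"
proof -
  have "\<bar>cyc_perturb d j k\<bar> \<le> real d" if "k < d" for k
    using cyc_dist_less[OF assms that] by (auto simp: cyc_perturb_def)
  then have "\<bar>cyc_perturb d j k * y k\<bar> \<le> real d * \<bar>y k\<bar>" if "k < d" for k
    using that by (simp add: abs_mult mult_right_mono)
  then have "(\<Sum>k<d. \<bar>cyc_perturb d j k * y k\<bar>) \<le> (\<Sum>k<d. real d * \<bar>y k\<bar>)"
    by (intro sum_mono) auto
  moreover have "\<bar>\<Sum>k<d. cyc_perturb d j k * y k\<bar> \<le> (\<Sum>k<d. \<bar>cyc_perturb d j k * y k\<bar>)"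
    by (rule sum_abs)
  ultimately have "\<bar>\<Sum>k<d. cyc_perturb d j k * y k\<bar> \<le> (\<Sum>k<d. real d * \<bar>y k\<bar>)" by linarith
  then show ?thesis by (simp add: sum_distrib_left)
qed

context
  fixes d :: nat and y :: "nat \<Rightarrow> real"
  assumes four_le_d: "4 \<le> d" and rows: "\<And>j. j < d + 1 \<Longrightarrow> (\<Sum>k<d. cyc_rows d j k * y k) \<le> 1"
begin

lemma cyc_rows_sum_le_1: "(\<Sum>k<d. y k) \<le> 1"
  using rows[of d] by (simp add: cyc_rows_def)

lemma cyc_rows_coordinate:
  assumes "j < d"
  shows "2 * y j \<le> 1 + (\<Sum>k<d. y k) + cyc_eps d * real d * (\<Sum>k<d. \<bar>y k\<bar>)"
proof -
  let ?G = "\<Sum>k<d. cyc_perturb d j k * y k"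
  have "0 < cyc_eps d" using four_le_d by (simp add: cyc_eps_def)
  then have "- (cyc_eps d * ?G) \<le> cyc_eps d * \<bar>?G\<bar>"
    using mult_left_mono[of "- ?G" "\<bar>?G\<bar>" "cyc_eps d"] by simp
  also have "\<dots> \<le> cyc_eps d * (real d * (\<Sum>k<d. \<bar>y k\<bar>))"
    using abs_cyc_perturbation_le[OF assms] \<open>0 < cyc_eps d\<close> by (intro mult_left_mono) auto
  finally show ?thesis using rows[of j] assms by (simp add: cyc_rows_expand)
qed

lemma cyc_rows_sum_lower:
  "- real d - real d * (cyc_eps d * real d * (\<Sum>k<d. \<bar>y k\<bar>)) \<le> (real d - 2) * (\<Sum>k<d. y k)"
proof -
  have "(\<Sum>j<d. 2 * y j) \<le> (\<Sum>j<d. 1 + (\<Sum>k<d. y k) + cyc_eps d * real d * (\<Sum>k<d. \<bar>y k\<bar>))"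
    using cyc_rows_coordinate by (intro sum_mono) auto
  moreover have "(\<Sum>j<d. 2 * y j) = 2 * (\<Sum>k<d. y k)" by (simp add: sum_distrib_left)
  ultimately have "2 * (\<Sum>k<d. y k)
      \<le> real d * (1 + (\<Sum>k<d. y k) + cyc_eps d * real d * (\<Sum>k<d. \<bar>y k\<bar>))"
    by simp
  then show ?thesis by (simp add: algebra_simps)
qed

lemma cyc_rows_error_small: "cyc_eps d * real d * (\<Sum>k<d. \<bar>y k\<bar>) < 1 / 4"
proof -
  define D where "D = real d"
  define s where "s = (\<Sum>k<d. y k)"
  define Q where "Q = (\<Sum>k<d. \<bar>y k\<bar>)"
  define T where "T = cyc_eps d * D * Q"
  have D: "4 \<le> D" using four_le_d by (simp add: D_def)
  have Q_eq: "Q = 16 * D * T" using D by (simp add: T_def cyc_eps_def D_def)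
  have "0 \<le> Q" unfolding Q_def by (intro sum_nonneg) auto
  have "y j \<le> 1 + T / 2" if "j < d" for j
    using cyc_rows_coordinate[OF that] cyc_rows_sum_le_1 by (simp add: T_def D_def Q_def)
  moreover have "0 \<le> T" using \<open>0 \<le> Q\<close> D by (simp add: Q_eq zero_le_mult_iff)
  ultimately have "(\<Sum>k<d. max (y k) 0) \<le> (\<Sum>k<d. 1 + T / 2)" by (intro sum_mono) auto
  then have "(\<Sum>k<d. max (y k) 0) \<le> D * (1 + T / 2)" by (simp add: D_def)
  moreover have "Q = 2 * (\<Sum>k<d. max (y k) 0) - s"
  proof -
    have "Q = (\<Sum>k<d. 2 * max (y k) 0 - y k)" unfolding Q_def by (intro sum.cong) auto
    then show ?thesis by (simp add: sum_subtractf s_def sum_distrib_left)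
  qed
  ultimately have "(D - 2) * Q \<le> (D - 2) * (2 * D + D * T - s)"
    using D by (intro mult_left_mono) (auto simp: algebra_simps)
  moreover have "- D - D * T \<le> (D - 2) * s"
    using cyc_rows_sum_lower by (simp add: D_def s_def T_def Q_def)
  ultimately have "D * (T * (15 * D - 31)) \<le> D * (2 * D - 3)"
    unfolding Q_eq by (simp add: algebra_simps)
  then have bound: "T * (15 * D - 31) \<le> 2 * D - 3" using D by simp
  have "T < 1 / 4"
  proof (rule ccontr)
    assume "\<not> T < 1 / 4"
    then have "(1 / 4) * (15 * D - 31) \<le> T * (15 * D - 31)" using D by (intro mult_right_mono) auto
    then have "(1 / 4) * (15 * D - 31) \<le> 2 * D - 3" using bound by (rule order_trans)
    then show False using D by simp
  qed
  then show ?thesis by (simp add: T_def D_def Q_def)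
qed

end

lemma sum_abs_le_1_if_cyc_rows:
  fixes Y :: "nat \<Rightarrow> int"
  assumes "4 \<le> d" and rows: "\<And>j. j < d + 1 \<Longrightarrow> (\<Sum>k<d. cyc_rows d j k * of_int (Y k)) \<le> 1"
  shows "(\<Sum>k<d. \<bar>Y k\<bar>) \<le> 1"
proof (rule sum_abs_le_1_if_cyclic_tiebreak)
  define T where "T = cyc_eps d * real d * (\<Sum>k<d. \<bar>real_of_int (Y k)\<bar>)"
  have T: "T < 1 / 4" unfolding T_def using cyc_rows_error_small[OF assms] .
  have "0 \<le> T" using assms(1) unfolding T_def cyc_eps_def by (simp add: sum_nonneg)
  show "3 \<le> d" using assms(1) by simp
  show "(\<Sum>k<d. Y k) \<le> 1" using cyc_rows_sum_le_1[OF assms] by (simp flip: of_int_sum)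
  have "- real d - real d * T \<le> (real d - 2) * of_int (\<Sum>k<d. Y k)"
    using cyc_rows_sum_lower[OF assms] by (simp add: T_def flip: of_int_sum)
  moreover have "real d * T \<le> real d * (1 / 4)" using T by (intro mult_left_mono) auto
  moreover have "(4::real) \<le> real d" using assms(1) by simp
  ultimately have "6 - 3 * real d < (real d - 2) * of_int (\<Sum>k<d. Y k)" by linarith
  then have "(real d - 2) * (-3) < (real d - 2) * of_int (\<Sum>k<d. Y k)" by (simp add: algebra_simps)
  moreover have "0 < real d - 2" using assms(1) by simp
  ultimately have "-3 < real_of_int (\<Sum>k<d. Y k)" using mult_less_cancel_left_pos by blast
  then show "-2 \<le> (\<Sum>k<d. Y k)" by (simp flip: of_int_sum)
  fix j assume "j < d"
  have "2 * real_of_int (Y j) \<le> 1 + of_int (\<Sum>k<d. Y k) + T"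
    using cyc_rows_coordinate[OF assms \<open>j < d\<close>] by (simp add: T_def flip: of_int_sum)
  then show "2 * Y j \<le> (\<Sum>k<d. Y k) + 1" using T by linarith
  assume "2 * Y j = (\<Sum>k<d. Y k) + 1"
  then have "real_of_int (2 * Y j) = real_of_int ((\<Sum>k<d. Y k) + 1)" by (rule arg_cong)
  then have "cyc_eps d * (\<Sum>k<d. cyc_perturb d j k * of_int (Y k)) \<le> 0"
    using rows[of j] \<open>j < d\<close> by (simp add: cyc_rows_expand)
  moreover have "0 < cyc_eps d" using assms(1) by (simp add: cyc_eps_def)
  ultimately have "(\<Sum>k<d. cyc_perturb d j k * of_int (Y k)) \<le> 0" by (simp add: mult_le_0_iff)
  then show "cyc_moment d Y j \<le> Y (cyc_next d j)" using cyc_perturb_moment[OF \<open>j < d\<close>] by simp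
qed

lemma polyhedron_halfspaces_card_facets_le:
  fixes a :: "nat \<Rightarrow> 'a::euclidean_space" and b :: "nat \<Rightarrow> real" and m :: nat
  defines "P \<equiv> {x. \<forall>j<m. a j \<bullet> x \<le> b j}"
  assumes full: "affine hull P = UNIV"
  shows "polyhedron P" "card {C. C facet_of P} \<le> m"
proof -
  define F where "F = (\<lambda>j. {x. a j \<bullet> x \<le> b j}) ` {j. j < m \<and> a j \<noteq> 0}"
  have "finite F" by (simp add: F_def)
  have halfspaces: "\<exists>a b. a \<noteq> 0 \<and> h = {x. a \<bullet> x \<le> b}" if "h \<in> F" for h
    using that by (auto simp: F_def)
  obtain p where "p \<in> P" using full by fastforce
  then have "0 \<le> b j" if "j < m" "a j = 0" for j using that by (auto simp: P_def)
  then have P_eq: "P = \<Inter>F" by (force simp: P_def F_def)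
  show "polyhedron P" unfolding polyhedron_def using \<open>finite F\<close> P_eq halfspaces by blast
  have "card {C. C facet_of P} \<le> card F"
    using card_facets_le_card_halfspaces[OF \<open>finite F\<close> halfspaces P_eq full] .
  also have "\<dots> \<le> m" unfolding F_def
    by (rule order_trans[OF card_image_le]) (auto intro: card_mono[of "{..<m}", simplified])
  finally show "card {C. C facet_of P} \<le> m" .
qed

lemma exists_diamond_relaxation_from_rows:
  fixes c :: "nat \<Rightarrow> nat \<Rightarrow> real"
  assumes "m \<le> CARD('n) + 1"
    and coeff_bound: "\<And>j k. j < m \<Longrightarrow> k < CARD('n) \<Longrightarrow> \<bar>c j k\<bar> \<le> 1"
    and int_solutions: "\<And>Y :: nat \<Rightarrow> int.
      (\<And>j. j < m \<Longrightarrow> (\<Sum>k<CARD('n). c j k * of_int (Y k)) \<le> 1) \<Longrightarrow> (\<Sum>k<CARD('n). \<bar>Y k\<bar>) \<le> 1"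
  shows "\<exists>P :: (real^'n) set. polyhedron P \<and> P \<inter> int_points = diamond
           \<and> card {C. C facet_of P} \<le> CARD('n) + 1"
proof -
  let ?d = "CARD('n)"
  obtain \<sigma> :: "nat \<Rightarrow> 'n" and idx where \<sigma>: "bij_betw \<sigma> {..<?d} UNIV"
    and idx: "\<And>i. idx i < ?d" and "\<And>i. \<sigma> (idx i) = i" and idx_\<sigma>: "\<And>k. k < ?d \<Longrightarrow> idx (\<sigma> k) = k"
    using obtain_nat_enumeration[where 'n = 'n] by blast
  have sum_\<sigma>: "(\<Sum>i\<in>UNIV. f i) = (\<Sum>k<?d. f (\<sigma> k))" for f :: "'n \<Rightarrow> real"
    using sum.reindex_bij_betw[OF \<sigma>, of f] by simp
  define a where "a j = (\<chi> i. c j (idx i))" for j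
  have inner_a: "a j \<bullet> x = (\<Sum>k<?d. c j k * x $ \<sigma> k)" for j x
    by (simp add: a_def inner_vec_def sum_\<sigma> idx_\<sigma>)
  define P where "P = {x. \<forall>j<m. a j \<bullet> x \<le> 1}"
  have "diamond \<subseteq> {x. a j \<bullet> x \<le> 1}" if "j < m" for j
    unfolding diamond_subset_halfspace_iff using coeff_bound[OF that idx(1)] by (simp add: a_def)
  then have "diamond \<subseteq> P" by (auto simp: P_def)
  moreover have "x \<in> diamond" if "x \<in> P" "x \<in> int_points" for x
  proof -
    define Y where "Y k = \<lfloor>x $ \<sigma> k\<rfloor>" for k
    have x_Y: "x $ \<sigma> k = of_int (Y k)" for k
      using \<open>x \<in> int_points\<close> by (auto simp: Y_def int_points_def elim: Ints_cases)
    have "(\<Sum>k<?d. c j k * of_int (Y k)) \<le> 1" if "j < m" for j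
      using \<open>x \<in> P\<close> that by (simp add: P_def inner_a x_Y)
    then have "(\<Sum>k<?d. \<bar>Y k\<bar>) \<le> 1" by (rule int_solutions)
    then have "(\<Sum>i\<in>UNIV. \<bar>x $ i\<bar>) \<le> 1" by (simp add: sum_\<sigma> x_Y flip: of_int_abs of_int_sum)
    then show ?thesis by (rule mem_diamond_if_sum_abs_le_1[OF \<open>x \<in> int_points\<close>])
  qed
  ultimately have "P \<inter> int_points = diamond" using diamond_subset_int_points by blast
  moreover have "affine hull P = UNIV"
    using hull_mono[OF \<open>diamond \<subseteq> P\<close>, of affine] affine_hull_diamond by auto
  then have "polyhedron P" "card {C. C facet_of P} \<le> m"
    using polyhedron_halfspaces_card_facets_le[of m a "\<lambda>_. 1"] by (simp_all add: P_def)
  ultimately show ?thesis using assms(1) by (intro exI[of _ P]) auto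
qed

definition rows_dim1 :: "nat \<Rightarrow> nat \<Rightarrow> real" where
  "rows_dim1 j k = (if j = 0 then 1 else -1)"

lemma sum_abs_le_1_if_rows_dim1:
  fixes Y :: "nat \<Rightarrow> int"
  assumes "\<And>j. j < 2 \<Longrightarrow> (\<Sum>k<1. rows_dim1 j k * of_int (Y k)) \<le> 1"
  shows "(\<Sum>k<1. \<bar>Y k\<bar>) \<le> 1"
  using assms[of 0] assms[of 1] by (simp add: rows_dim1_def)

definition rows_dim3 :: "nat \<Rightarrow> nat \<Rightarrow> real" where
  "rows_dim3 j k = [[-1, -1, 1/2], [-1, 1, -1/2], [1, -1/2, -1], [1, 1/2, 1]] ! j ! k"

lemma abs_rows_dim3_le_1: "j < 4 \<Longrightarrow> k < 3 \<Longrightarrow> \<bar>rows_dim3 j k\<bar> \<le> 1"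
  by (auto simp: rows_dim3_def less_Suc_eq numeral_eq_Suc)

lemma sum_abs_le_1_if_rows_dim3:
  fixes Y :: "nat \<Rightarrow> int"
  assumes rows: "\<And>j. j < 4 \<Longrightarrow> (\<Sum>k<3. rows_dim3 j k * of_int (Y k)) \<le> 1"
  shows "(\<Sum>k<3. \<bar>Y k\<bar>) \<le> 1"
proof -
  have sum3: "(\<Sum>k<3. f k) = f 0 + f 1 + f 2" for f :: "nat \<Rightarrow> 'a::comm_monoid_add"
    by (simp add: numeral_3_eq_3 numeral_2_eq_2 lessThan_Suc ac_simps)
  have "real_of_int (- 2 * Y 0 - 2 * Y 1 + Y 2) \<le> 2" "real_of_int (- 2 * Y 0 + 2 * Y 1 - Y 2) \<le> 2"
       "real_of_int (2 * Y 0 - Y 1 - 2 * Y 2) \<le> 2" "real_of_int (2 * Y 0 + Y 1 + 2 * Y 2) \<le> 2"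
    using rows[of 0] rows[of 1] rows[of 2] rows[of 3] by (simp_all add: sum3 rows_dim3_def)
  then have "- 2 * Y 0 - 2 * Y 1 + Y 2 \<le> 2" "- 2 * Y 0 + 2 * Y 1 - Y 2 \<le> 2"
      "2 * Y 0 - Y 1 - 2 * Y 2 \<le> 2" "2 * Y 0 + Y 1 + 2 * Y 2 \<le> 2"
    by linarith+
  moreover have "\<bar>x\<bar> + \<bar>y\<bar> + \<bar>z\<bar> \<le> 1"
    if "- 2 * x - 2 * y + z \<le> 2" "- 2 * x + 2 * y - z \<le> 2" "2 * x - y - 2 * z \<le> 2" "2 * x + y + 2 * z \<le> 2"
    for x y z :: int
    using that by (smt (z3))
  ultimately show ?thesis unfolding sum3 by blast
qed

lemma exists_diamond_relaxation:
  assumes "CARD('n::finite) \<noteq> 2"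
  shows "\<exists>P :: (real^'n) set. polyhedron P \<and> P \<inter> int_points = diamond
           \<and> card {C. C facet_of P} \<le> CARD('n) + 1"
proof -
  have "0 < CARD('n)" by simp
  then consider "CARD('n) = 1" | "CARD('n) = 3" | "4 \<le> CARD('n)" using assms by linarith
  then show ?thesis
  proof cases
    case 1
    show ?thesis
      by (rule exists_diamond_relaxation_from_rows[where m = 2 and c = rows_dim1])
        (use 1 sum_abs_le_1_if_rows_dim1 in \<open>auto simp: rows_dim1_def\<close>)
  next
    case 2
    show ?thesis
      by (rule exists_diamond_relaxation_from_rows[where m = 4 and c = rows_dim3])
        (use 2 abs_rows_dim3_le_1 sum_abs_le_1_if_rows_dim3 in auto)
  next
    case 3
    show ?thesis
      by (rule exists_diamond_relaxation_from_rows[where m = "CARD('n) + 1" and c = "cyc_rows CARD('n)"])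
        (use 3 abs_cyc_rows_le_1 sum_abs_le_1_if_cyc_rows in auto)
  qed
qed

theorem theorem5p5:
  assumes "CARD('n::finite) \<noteq> 2"
  shows "rc (diamond :: (real ^ 'n) set) = CARD('n) + 1"
  unfolding rc_def
proof (rule Least_equality)
  obtain P :: "(real^'n) set" where "polyhedron P" "P \<inter> int_points = diamond"
    and "card {C. C facet_of P} \<le> CARD('n) + 1"
    using exists_diamond_relaxation[OF assms] by blast
  moreover from this have "CARD('n) + 1 \<le> card {C. C facet_of P}"
    by (intro card_facets_ge_if_int_points_diamond)
  ultimately show "\<exists>P :: (real^'n) set. polyhedron P \<and> P \<inter> int_points = diamond
      \<and> card {F. F facet_of P} = CARD('n) + 1"
    by (intro exI[of _ P]) simp
next
  fix m assume "\<exists>P :: (real^'n) set. polyhedron P \<and> P \<inter> int_points = diamond \<and> card {F. F facet_of P} = m"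
  then show "CARD('n) + 1 \<le> m" using card_facets_ge_if_int_points_diamond by blast
qed

end
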